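(* Let $\mathbb X=\langle X,\rho\rangle$ be the Rado graph (countable random graph; $\rho$ symmetric irreflexive), let $x,y\in X$ with $\langle x,y\rangle\in\rho$, and let $\mathbb Y=\langle X,\sigma\rangle$ where $\sigma=\rho\setminus\{\langle x,y\rangle\}$. Then $\mathbb X\sim_c\mathbb Y$ and $\mathbb X\not\equiv\mathbb Y$.
   Context: The language has one binary relation symbol. A condensation from $\langle X,\rho\rangle$ onto $\langle Y,\sigma\rangle$ is a bijection $F:X\to Y$ with $\langle a,b\rangle\in\rho\Rightarrow\langle F(a),F(b)\rangle\in\sigma$; $\mathbb X\sim_c\mathbb Y$ means condensations exist in both directions. $\equiv$ denotes first order elementary equivalence. *)

theory Defs
  imports Main "HOL-Library.Countable_Set"
begin

definition condensation :: "('a \<Rightarrow> 'b) \<Rightarrow> 'a set \<Rightarrow> ('a \<times> 'a) set \<Rightarrow> 'b set \<Rightarrow> ('b \<times> 'b) set \<Rightarrow> bool" where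
  "condensation F X \<rho> Y \<sigma> \<longleftrightarrow> bij_betw F X Y \<and> (\<forall>a b. (a, b) \<in> \<rho> \<longrightarrow> (F a, F b) \<in> \<sigma>)"

definition cond_equiv :: "'a set \<Rightarrow> ('a \<times> 'a) set \<Rightarrow> 'b set \<Rightarrow> ('b \<times> 'b) set \<Rightarrow> bool" where
  "cond_equiv X \<rho> Y \<sigma> \<longleftrightarrow> (\<exists>F. condensation F X \<rho> Y \<sigma>) \<and> (\<exists>G. condensation G Y \<sigma> X \<rho>)"

datatype fm = FEq nat nat | FRel nat nat | FNeg fm | FConj fm fm | FEx nat fm

fun fv :: "fm \<Rightarrow> nat set" where
  "fv (FEq i j) = {i, j}"
| "fv (FRel i j) = {i, j}"
| "fv (FNeg \<phi>) = fv \<phi>"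
| "fv (FConj \<phi> \<psi>) = fv \<phi> \<union> fv \<psi>"
| "fv (FEx i \<phi>) = fv \<phi> - {i}"

fun sat :: "'a set \<Rightarrow> ('a \<times> 'a) set \<Rightarrow> fm \<Rightarrow> (nat \<Rightarrow> 'a) \<Rightarrow> bool" where
  "sat X R (FEq i j) e \<longleftrightarrow> e i = e j"
| "sat X R (FRel i j) e \<longleftrightarrow> (e i, e j) \<in> R"
| "sat X R (FNeg \<phi>) e \<longleftrightarrow> \<not> sat X R \<phi> e"
| "sat X R (FConj \<phi> \<psi>) e \<longleftrightarrow> sat X R \<phi> e \<and> sat X R \<psi> e"
| "sat X R (FEx i \<phi>) e \<longleftrightarrow> (\<exists>a\<in>X. sat X R \<phi> (e(i := a)))"

text \<open>A sentence holds in a structure (for sentences the assignment is irrelevant).\<close>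
definition models :: "'a set \<Rightarrow> ('a \<times> 'a) set \<Rightarrow> fm \<Rightarrow> bool" where
  "models X R \<phi> \<longleftrightarrow> (\<forall>e. sat X R \<phi> e)"

definition elem_equiv :: "'a set \<Rightarrow> ('a \<times> 'a) set \<Rightarrow> 'b set \<Rightarrow> ('b \<times> 'b) set \<Rightarrow> bool" where
  "elem_equiv X \<rho> Y \<sigma> \<longleftrightarrow> (\<forall>\<phi>. fv \<phi> = {} \<longrightarrow> (models X \<rho> \<phi> \<longleftrightarrow> models Y \<sigma> \<phi>))"

text \<open>The Rado graph: a countable graph (symmetric, irreflexive) with the extension property;
  it is unique up to isomorphism.\<close>
definition rado_graph :: "'a set \<Rightarrow> ('a \<times> 'a) set \<Rightarrow> bool" where
  "rado_graph X \<rho> \<longleftrightarrow> countable X \<and> \<rho> \<subseteq> X \<times> X \<and> sym \<rho> \<and> (\<forall>a. (a, a) \<notin> \<rho>) \<and>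
     (\<forall>U V. finite U \<and> finite V \<and> U \<subseteq> X \<and> V \<subseteq> X \<and> U \<inter> V = {} \<longrightarrow>
        (\<exists>z\<in>X - (U \<union> V). (\<forall>u\<in>U. (z, u) \<in> \<rho>) \<and> (\<forall>v\<in>V. (z, v) \<notin> \<rho>)))"

end

theory Submission
  imports Defs
begin

text \<open>Since \<open>\<rho> - {(x, y)}\<close> keeps the edge \<open>(y, x)\<close>, it is no longer symmetric, and the
  sentence expressing symmetry separates the two structures. The identity condenses
  \<open>\<langle>X, \<rho> - {(x, y)}\<rangle>\<close> onto \<open>\<langle>X, \<rho>\<rangle>\<close>. Conversely, choose \<open>z \<noteq> x\<close> not adjacent to \<open>x\<close>;
  a back-and-forth construction extends the finite partial homomorphism \<open>x \<mapsto> x, z \<mapsto> y\<close>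
  to a bijective endomorphism \<open>F\<close> of the Rado graph. The only preimage of \<open>(x, y)\<close> under
  \<open>F \<times> F\<close> is the non-edge \<open>(x, z)\<close>, so \<open>F\<close> is a condensation onto \<open>\<langle>X, \<rho> - {(x, y)}\<rangle>\<close>.\<close>

definition partial_hom :: "('a \<times> 'a) set \<Rightarrow> ('a \<times> 'a) set \<Rightarrow> bool" where
  "partial_hom R P \<longleftrightarrow> single_valued P \<and> single_valued (P\<inverse>) \<and>
     (\<forall>a b a' b'. (a, b) \<in> P \<longrightarrow> (a', b') \<in> P \<longrightarrow> (a, a') \<in> R \<longrightarrow> (b, b') \<in> R)"

lemma partial_hom_insert:
  assumes "partial_hom R P" "a \<notin> Domain P" "b \<notin> Range P"
    and "(a, a) \<in> R \<Longrightarrow> (b, b) \<in> R"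
    and "\<And>a' b'. (a', b') \<in> P \<Longrightarrow> (a, a') \<in> R \<Longrightarrow> (b, b') \<in> R"
    and "\<And>a' b'. (a', b') \<in> P \<Longrightarrow> (a', a) \<in> R \<Longrightarrow> (b', b) \<in> R"
  shows "partial_hom R (insert (a, b) P)"
  using assms unfolding partial_hom_def single_valued_def by blast

lemma rado_graphD:
  assumes "rado_graph X R"
  shows "countable X" "R \<subseteq> X \<times> X" "sym R" "(a, a) \<notin> R"
  using assms unfolding rado_graph_def by simp_all

lemma rado_graph_extension:
  assumes "rado_graph X R" "finite U" "finite V" "U \<subseteq> X" "V \<subseteq> X" "U \<inter> V = {}"
  obtains z where "z \<in> X" "z \<notin> U" "z \<notin> V" "\<forall>u\<in>U. (z, u) \<in> R" "\<forall>v\<in>V. (z, v) \<notin> R"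
proof -
  have "\<forall>U V. finite U \<and> finite V \<and> U \<subseteq> X \<and> V \<subseteq> X \<and> U \<inter> V = {} \<longrightarrow>
      (\<exists>z\<in>X - (U \<union> V). (\<forall>u\<in>U. (z, u) \<in> R) \<and> (\<forall>v\<in>V. (z, v) \<notin> R))"
    using assms(1) unfolding rado_graph_def by (elim conjE) assumption
  then obtain z where "z \<in> X - (U \<union> V)" "\<forall>u\<in>U. (z, u) \<in> R" "\<forall>v\<in>V. (z, v) \<notin> R"
    using assms(2-6) by meson
  then show thesis using that by blast
qed

lemma rado_graph_partial_hom_extend_forth:
  assumes rado: "rado_graph X R" and hom: "partial_hom R P"
    and fin: "finite P" and PX: "P \<subseteq> X \<times> X" and a: "a \<notin> Domain P"
  obtains b where "b \<in> X" "partial_hom R (insert (a, b) P)"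
proof -
  have sym: "sym R" and irrefl: "(a, a) \<notin> R"
    using rado_graphD[OF rado] by blast+
  \<comment> \<open>\<open>b\<close> must be a fresh vertex adjacent to the images of all neighbours of \<open>a\<close>\<close>
  define U where "U = P `` (R `` {a})"
  have "U \<subseteq> Range P" unfolding U_def by auto
  moreover have "finite (Range P)" using fin by (simp add: finite_Range)
  ultimately have fin_U: "finite U" and U_X: "U \<subseteq> X" using PX finite_subset by auto
  have fin_V: "finite (Range P - U)" and V_X: "Range P - U \<subseteq> X"
    using PX \<open>finite (Range P)\<close> by auto
  obtain b where b: "b \<in> X" "b \<notin> U" "b \<notin> Range P - U" "\<forall>u\<in>U. (b, u) \<in> R"
    "\<forall>v\<in>Range P - U. (b, v) \<notin> R"
    by (rule rado_graph_extension[OF rado fin_U fin_V U_X V_X Diff_disjoint])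
  have "partial_hom R (insert (a, b) P)"
  proof (rule partial_hom_insert[OF hom a])
    show "b \<notin> Range P" using b(2,3) by blast
    show "(a, a) \<in> R \<Longrightarrow> (b, b) \<in> R" using irrefl by blast
    show "(b, b') \<in> R" if "(a', b') \<in> P" "(a, a') \<in> R" for a' b'
      using that b(4) unfolding U_def by blast
    then show "(b', b) \<in> R" if "(a', b') \<in> P" "(a', a) \<in> R" for a' b'
      using that sym by (meson symD)
  qed
  with b(1) show thesis by (rule that)
qed

lemma rado_graph_partial_hom_extend_back:
  assumes rado: "rado_graph X R" and hom: "partial_hom R P"
    and fin: "finite P" and PX: "P \<subseteq> X \<times> X" and b: "b \<notin> Range P"
  obtains a where "a \<in> X" "partial_hom R (insert (a, b) P)"
proof -
  have sym: "sym R" and irrefl: "\<And>c. (c, c) \<notin> R"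
    using rado_graphD[OF rado] by blast+
  \<comment> \<open>a fresh vertex with no neighbour in \<open>Domain P\<close> imposes no constraint on its image\<close>
  have fin_D: "finite (Domain P)" and D_X: "Domain P \<subseteq> X"
    using fin PX by (auto simp: finite_Domain)
  obtain a where a: "a \<in> X" "a \<notin> {}" "a \<notin> Domain P" "\<forall>u\<in>{}. (a, u) \<in> R"
    "\<forall>v\<in>Domain P. (a, v) \<notin> R"
    by (rule rado_graph_extension[OF rado finite.emptyI fin_D empty_subsetI D_X Int_empty_left])
  have "partial_hom R (insert (a, b) P)"
  proof (rule partial_hom_insert[OF hom a(3) b])
    show "(a, a) \<in> R \<Longrightarrow> (b, b) \<in> R" using irrefl by blast
    show "(b, b') \<in> R" if "(a', b') \<in> P" "(a, a') \<in> R" for a' b'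
      using that a(5) by blast
    show "(b', b) \<in> R" if "(a', b') \<in> P" "(a', a) \<in> R" for a' b'
      using that a(5) sym by (meson Domain.DomainI symD)
  qed
  with a(1) show thesis by (rule that)
qed

lemma rado_graph_partial_hom_extend:
  assumes rado: "rado_graph X R" and hom: "partial_hom R P"
    and fin: "finite P" and PX: "P \<subseteq> X \<times> X" and a: "a \<in> X"
  obtains Q where "partial_hom R Q" "finite Q" "Q \<subseteq> X \<times> X" "P \<subseteq> Q"
    "a \<in> Domain Q" "a \<in> Range Q"
proof -
  obtain P' where P': "partial_hom R P'" "finite P'" "P' \<subseteq> X \<times> X" "P \<subseteq> P'" "a \<in> Domain P'"
  proof (cases "a \<in> Domain P")
    case False
    then obtain b where "b \<in> X" "partial_hom R (insert (a, b) P)"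
      by (rule rado_graph_partial_hom_extend_forth[OF rado hom fin PX])
    then show thesis using that[of "insert (a, b) P"] fin PX a by blast
  qed (use that hom fin PX in blast)
  show thesis
  proof (cases "a \<in> Range P'")
    case False
    then obtain a' where "a' \<in> X" "partial_hom R (insert (a', a) P')"
      by (rule rado_graph_partial_hom_extend_back[OF rado P'(1-3)])
    then show thesis using that[of "insert (a', a) P'"] P' a by blast
  qed (use that P' in blast)
qed

lemma partial_hom_UN_chain:
  assumes hom: "\<And>n. partial_hom R (S n)" and chain: "\<And>n. S n \<subseteq> S (Suc n)"
  shows "partial_hom R (\<Union>n. S n)"
proof -
  have common: "\<exists>n. p \<in> S n \<and> q \<in> S n" if "p \<in> (\<Union>n. S n)" "q \<in> (\<Union>n. S n)" for p q
  proof -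
    from that obtain m n where "p \<in> S m" "q \<in> S n" by blast
    then show ?thesis
      using lift_Suc_mono_le[of S, OF chain] by (meson max.cobounded1 max.cobounded2 subsetD)
  qed
  show ?thesis
    unfolding partial_hom_def single_valued_def
  proof (intro conjI allI impI)
    fix a b c assume "(a, b) \<in> (\<Union>n. S n)" "(a, c) \<in> (\<Union>n. S n)"
    then show "b = c"
      using common hom unfolding partial_hom_def by (meson single_valuedD)
  next
    fix a b c assume "(a, b) \<in> (\<Union>n. S n)\<inverse>" "(a, c) \<in> (\<Union>n. S n)\<inverse>"
    then show "b = c"
      using common[of "(b, a)" "(c, a)"] hom unfolding partial_hom_def
      by (meson converse_iff single_valuedD)
  next
    fix a b a' b' assume "(a, b) \<in> (\<Union>n. S n)" "(a', b') \<in> (\<Union>n. S n)" "(a, a') \<in> R"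
    then show "(b, b') \<in> R"
      using common[of "(a, b)" "(a', b')"] hom unfolding partial_hom_def by blast
  qed
qed

lemma partial_hom_condensation:
  assumes hom: "partial_hom R Q" and dom: "Domain Q = X" and ran: "Range Q = X"
    and RX: "R \<subseteq> X \<times> X"
  obtains F where "condensation F X R X R" "\<And>a b. (a, b) \<in> Q \<Longrightarrow> F a = b"
proof
  have sv: "single_valued Q" "single_valued (Q\<inverse>)"
    and edge: "\<And>a b a' b'. (a, b) \<in> Q \<Longrightarrow> (a', b') \<in> Q \<Longrightarrow> (a, a') \<in> R \<Longrightarrow> (b, b') \<in> R"
    using hom unfolding partial_hom_def by blast+
  define F where "F a = (THE b. (a, b) \<in> Q)" for a
  show graph: "F a = b" if "(a, b) \<in> Q" for a b
    unfolding F_def using that sv(1) by (blast intro: the_equality dest: single_valuedD)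
  have "bij_betw F X X"
  proof (rule bij_betw_imageI)
    show "inj_on F X"
      using graph dom sv(2) by (smt (verit) Domain.cases converse_iff inj_onI single_valuedD)
    have "F ` Domain Q = Range Q" using graph by force
    then show "F ` X = X" using dom ran by simp
  qed
  moreover have "(F a, F b) \<in> R" if "(a, b) \<in> R" for a b
    using that RX graph edge dom by blast
  ultimately show "condensation F X R X R"
    unfolding condensation_def by blast
qed

lemma countable_exhausting_chain:
  assumes "countable X" "good P"
    and extend: "\<And>Q a. good Q \<Longrightarrow> a \<in> X \<Longrightarrow>
      \<exists>Q'. good Q' \<and> Q \<subseteq> Q' \<and> a \<in> Domain Q' \<and> a \<in> Range Q'"
  obtains S where "S 0 = P" "\<And>n. good (S n)" "\<And>n. S n \<subseteq> S (Suc n)"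
    "X \<subseteq> Domain (\<Union>n. S n)" "X \<subseteq> Range (\<Union>n. S n)"
proof (cases "X = {}")
  case True
  then show thesis using that[of "\<lambda>_. P"] assms(2) by simp
next
  case False
  define e where "e = from_nat_into X"
  have e: "e n \<in> X" for n unfolding e_def using from_nat_into[OF False] .
  define ext where
    "ext n Q = (SOME Q'. good Q' \<and> Q \<subseteq> Q' \<and> e n \<in> Domain Q' \<and> e n \<in> Range Q')" for n Q
  have ext: "good (ext n Q) \<and> Q \<subseteq> ext n Q \<and> e n \<in> Domain (ext n Q) \<and> e n \<in> Range (ext n Q)"
    if "good Q" for n Q
    unfolding ext_def using someI_ex[OF extend[OF that e]] .
  define S where "S = rec_nat P ext"
  have S_0: "S 0 = P" and S_Suc: "S (Suc n) = ext n (S n)" for n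
    unfolding S_def by simp_all
  have good_S: "good (S n)" for n
  proof (induction n)
    case 0
    show ?case using assms(2) S_0 by simp
  next
    case (Suc n)
    show ?case using ext[OF Suc] S_Suc by simp
  qed
  have chain: "S n \<subseteq> S (Suc n)" for n using ext[OF good_S] S_Suc by simp
  have "X \<subseteq> range e"
    using from_nat_into_surj[OF assms(1)] unfolding e_def by blast
  moreover have "e n \<in> Domain (\<Union>n. S n)" "e n \<in> Range (\<Union>n. S n)" for n
  proof -
    have "e n \<in> Domain (S (Suc n))" "e n \<in> Range (S (Suc n))"
      using ext[OF good_S] S_Suc by simp_all
    moreover have "S (Suc n) \<subseteq> (\<Union>n. S n)" by (rule UN_upper) simp
    ultimately show "e n \<in> Domain (\<Union>n. S n)" "e n \<in> Range (\<Union>n. S n)"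
      using Domain_mono Range_mono by blast+
  qed
  ultimately have "X \<subseteq> Domain (\<Union>n. S n)" "X \<subseteq> Range (\<Union>n. S n)" by auto
  then show thesis by (rule that[OF S_0 good_S chain])
qed

lemma rado_graph_partial_hom_extends_to_condensation:
  assumes rado: "rado_graph X R" and hom: "partial_hom R P"
    and fin: "finite P" and PX: "P \<subseteq> X \<times> X"
  obtains F where "condensation F X R X R" "\<And>a b. (a, b) \<in> P \<Longrightarrow> F a = b"
proof -
  have countable: "countable X" and RX: "R \<subseteq> X \<times> X"
    using rado_graphD[OF rado] by blast+
  define good where "good Q \<longleftrightarrow> partial_hom R Q \<and> finite Q \<and> Q \<subseteq> X \<times> X" for Q
  have "good P" unfolding good_def using hom fin PX by blast
  moreover have "\<exists>Q'. good Q' \<and> Q \<subseteq> Q' \<and> a \<in> Domain Q' \<and> a \<in> Range Q'"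
    if "good Q" "a \<in> X" for Q a
  proof -
    obtain Q' where "partial_hom R Q'" "finite Q'" "Q' \<subseteq> X \<times> X" "Q \<subseteq> Q'"
      "a \<in> Domain Q'" "a \<in> Range Q'"
      using rado_graph_partial_hom_extend[OF rado _ _ _ \<open>a \<in> X\<close>] \<open>good Q\<close>
      unfolding good_def by blast
    then show ?thesis unfolding good_def by blast
  qed
  ultimately show thesis
  proof (rule countable_exhausting_chain[OF countable])
    fix S assume S: "S 0 = P" "\<And>n. good (S n)" "\<And>n. S n \<subseteq> S (Suc n)"
      "X \<subseteq> Domain (\<Union>n. S n)" "X \<subseteq> Range (\<Union>n. S n)"
    have "partial_hom R (\<Union>n. S n)"
      by (rule partial_hom_UN_chain) (use S(2,3) in \<open>simp_all add: good_def\<close>)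
    moreover have "(\<Union>n. S n) \<subseteq> X \<times> X" using S(2) unfolding good_def by (simp add: UN_least)
    then have "Domain (\<Union>n. S n) = X" "Range (\<Union>n. S n) = X" using S(4,5) by auto
    ultimately show thesis
    proof (rule partial_hom_condensation[OF _ _ _ RX])
      fix F assume F: "condensation F X R X R" "\<And>a b. (a, b) \<in> (\<Union>n. S n) \<Longrightarrow> F a = b"
      have "P \<subseteq> (\<Union>n. S n)" using UN_upper[of 0 UNIV S] S(1) by simp
      with F show thesis by (intro that) blast+
    qed
  qed
qed

lemma condensation_Diff_edge:
  assumes F: "condensation F X R X R" and RX: "R \<subseteq> X \<times> X"
    and "x \<in> X" "z \<in> X" "F x = x" "F z = y" "(x, z) \<notin> R"
  shows "condensation F X R X (R - {(x, y)})"
proof -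
  have inj: "inj_on F X" using F unfolding condensation_def bij_betw_def by blast
  have "(F a, F b) \<noteq> (x, y)" if ab: "(a, b) \<in> R" for a b
  proof
    assume "(F a, F b) = (x, y)"
    then have "F a = F x" "F b = F z" using assms(5,6) by auto
    moreover have "a \<in> X" "b \<in> X" using ab RX by auto
    ultimately have "a = x" "b = z" using inj assms(3,4) by (auto simp: inj_on_eq_iff)
    then show False using ab assms(7) by blast
  qed
  then show ?thesis using F unfolding condensation_def by blast
qed

lemma rado_graph_cond_equiv_Diff_edge:
  assumes rado: "rado_graph X R" and "x \<in> X" "y \<in> X" "x \<noteq> y"
  shows "cond_equiv X R X (R - {(x, y)})"
proof -
  have sym: "sym R" and irrefl: "\<And>a. (a, a) \<notin> R" and RX: "R \<subseteq> X \<times> X"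
    using rado_graphD[OF rado] by blast+
  obtain z where z: "z \<in> X" "z \<notin> {x}" "\<forall>v\<in>{x}. (z, v) \<notin> R"
    by (rule rado_graph_extension[OF rado finite.emptyI finite.insertI[OF finite.emptyI]
          empty_subsetI _ Int_empty_left]) (use assms(2) in blast)
  then have "(x, z) \<notin> R" using sym by (auto dest: symD)
  moreover have "partial_hom R {(x, x), (z, y)}"
    using z \<open>(x, z) \<notin> R\<close> \<open>x \<noteq> y\<close> irrefl unfolding partial_hom_def single_valued_def by auto
  then obtain F where "condensation F X R X R" "\<And>a b. (a, b) \<in> {(x, x), (z, y)} \<Longrightarrow> F a = b"
    by (rule rado_graph_partial_hom_extends_to_condensation[OF rado])
      (use assms(2,3) z(1) in auto)
  ultimately have "condensation F X R X (R - {(x, y)})"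
    using condensation_Diff_edge[OF _ RX assms(2) z(1)] by simp
  moreover have "condensation id X (R - {(x, y)}) X R"
    unfolding condensation_def by auto
  ultimately show ?thesis unfolding cond_equiv_def by blast
qed

definition sym_sentence :: fm where
  "sym_sentence = FNeg (FEx 0 (FEx 1 (FConj (FRel 0 1) (FNeg (FRel 1 0)))))"

lemma fv_sym_sentence: "fv sym_sentence = {}"
  by (auto simp: sym_sentence_def)

lemma models_sym_sentence:
  "models X R sym_sentence \<longleftrightarrow> (\<forall>a\<in>X. \<forall>b\<in>X. (a, b) \<in> R \<longrightarrow> (b, a) \<in> R)"
  by (auto simp: models_def sym_sentence_def)

lemma sym_not_elem_equiv_Diff_edge:
  assumes "sym R" "(x, y) \<in> R" "x \<noteq> y" "x \<in> X" "y \<in> X"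
  shows "\<not> elem_equiv X R X (R - {(x, y)})"
proof -
  have "models X R sym_sentence"
    using assms(1) by (auto simp: models_sym_sentence dest: symD)
  moreover have "(y, x) \<in> R - {(x, y)}"
    using assms(1-3) by (auto dest: symD)
  then have "\<not> models X (R - {(x, y)}) sym_sentence"
    using assms(4,5) by (auto simp: models_sym_sentence)
  ultimately show ?thesis
    unfolding elem_equiv_def using fv_sym_sentence by blast
qed

theorem mainTheorem13:
  fixes X :: "'a set" and \<rho> :: "('a \<times> 'a) set" and x y :: 'a
  assumes "rado_graph X \<rho>"
    and "x \<in> X" and "y \<in> X" and "(x, y) \<in> \<rho>"
  shows "cond_equiv X \<rho> X (\<rho> - {(x, y)}) \<and> \<not> elem_equiv X \<rho> X (\<rho> - {(x, y)})"
proof -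
  have "sym \<rho>" "x \<noteq> y"
    using rado_graphD[OF assms(1)] assms(4) by auto
  show ?thesis
    using rado_graph_cond_equiv_Diff_edge[OF assms(1-3) \<open>x \<noteq> y\<close>]
      sym_not_elem_equiv_Diff_edge[OF \<open>sym \<rho>\<close> assms(4) \<open>x \<noteq> y\<close> assms(2,3)] ..
qed

end
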